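(* Let $p:[0,1]\to\mathbb{R}_{\ge0}$ be a monotone, continuous, convex pricing function with $p(0)=0$, let $v(x)=\tau x$ with $\tau\ge0$, let $S\subset\mathbb{R}_{\ge0}$ be a finite set with $\tau\in S$, and let $\hat p=\mathrm{disc}(p,S)$. Then for every $b\in\mathbb{R}_{\ge0}$, $r(\hat p\mid v,b)\ge r(p\mid v,b)$.
   Context: Revenue: for a pricing function $q$ and budget $b$, $F=\{x\in[0,1]:q(x)\le b\}$, $u^*=\sup_{x\in F}(v(x)-q(x))$, $\mathrm{Dem}=\{x\in F:v(x)-q(x)=u^*\}$, $r(q\mid v,b)=\sup_{x\in\mathrm{Dem}}q(x)$. For convex $f:[0,1]\to\mathbb{R}$: $f'(x)=\sup_{\delta\in(0,x]}(f(x)-f(x-\delta))/\delta$ for $x>0$, $f'(0)=-\infty$, and $\ell(f\mid\beta)=\max\{x\in[0,1]:f'(x)\le\beta\}$. For non-decreasing $\mathbf{z}\in[0,1]^{k-1}$ and $\boldsymbol\alpha\in\mathbb{R}^k$, with $z_0=0$, $\mathrm{plin}(\mathbf{z},\boldsymbol\alpha)(0)=0$ and for $x>0$, $\mathrm{plin}(\mathbf{z},\boldsymbol\alpha)(x)=\sum_{j=1}^{i-1}\alpha_j(z_j-z_{j-1})+\alpha_i(x-z_{i-1})$, where $i\in[k]$ is largest with $z_{i-1}<x$. For continuous convex $f$ and $S=\{\alpha_1<\dots<\alpha_k\}$: $z_i=\ell(f\mid\alpha_i)$ for $i\in[k-1]$ and $\mathrm{disc}(f,S)=f(0)+\mathrm{plin}(\mathbf{z},\boldsymbol\alpha)$.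 *)

theory Defs
  imports "HOL-Analysis.Analysis" "HOL-Library.Extended_Real"
begin

definition feasible :: "(real \<Rightarrow> real) \<Rightarrow> real \<Rightarrow> real set" where
  "feasible q b = {x \<in> {0..1}. q x \<le> b}"

definition opt_util :: "(real \<Rightarrow> real) \<Rightarrow> (real \<Rightarrow> real) \<Rightarrow> real \<Rightarrow> real" where
  "opt_util q v b = (SUP x\<in>feasible q b. v x - q x)"

definition demand :: "(real \<Rightarrow> real) \<Rightarrow> (real \<Rightarrow> real) \<Rightarrow> real \<Rightarrow> real set" where
  "demand q v b = {x \<in> feasible q b. v x - q x = opt_util q v b}"

definition revenue :: "(real \<Rightarrow> real) \<Rightarrow> (real \<Rightarrow> real) \<Rightarrow> real \<Rightarrow> real" where
  "revenue q v b = (SUP x\<in>demand q v b. q x)"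

definition lder :: "(real \<Rightarrow> real) \<Rightarrow> real \<Rightarrow> ereal" where
  "lder f x = (if x = 0 then -\<infinity>
              else (SUP \<delta>\<in>{0<..x}. ereal ((f x - f (x - \<delta>)) / \<delta>)))"

definition ell :: "(real \<Rightarrow> real) \<Rightarrow> real \<Rightarrow> real" where
  "ell f \<beta> = (GREATEST x. x \<in> {0..1} \<and> lder f x \<le> ereal \<beta>)"

text \<open>Piecewise linear function plin(z, alpha) with k pieces; z indexed 1..k-1, alpha 1..k,
  and z_0 = 0.\<close>

definition plin :: "nat \<Rightarrow> (nat \<Rightarrow> real) \<Rightarrow> (nat \<Rightarrow> real) \<Rightarrow> real \<Rightarrow> real" where
  "plin k z \<alpha> x =
     (let z0 = (\<lambda>i. if i = 0 then 0 else z i) in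
      if x = 0 then 0
      else (let i = (GREATEST i. i \<in> {1..k} \<and> z0 (i - 1) < x) in
            (\<Sum>j=1..i-1. \<alpha> j * (z0 j - z0 (j - 1))) + \<alpha> i * (x - z0 (i - 1))))"

definition disc :: "(real \<Rightarrow> real) \<Rightarrow> real set \<Rightarrow> real \<Rightarrow> real" where
  "disc f S =
     (let k = card S;
          \<alpha> = (\<lambda>i. sorted_list_of_set S ! (i - 1));
          z = (\<lambda>i. ell f (\<alpha> i))
      in (\<lambda>x. f 0 + plin k z \<alpha> x))"

end

theory Submission
  imports Defs
begin

(* For a continuous price q on [0,1], the left-derivative condition q'(x) <= beta says exactly
   that beta x - q x attains its maximum over [0,x] at x; hence ell(q|beta) is the largest
   maximiser of beta x - q x on [0,1]. When this utility is nondecreasing up to its last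
   maximiser c (true for convex q), the buyer with budget b pays q(min c d), where [0,d] is the
   feasible set, and the revenue is min (q c) b.
   For p this gives min (p c) b with c = ell(p|tau). The discretisation is piecewise linear with
   slopes alpha_1 < ... < alpha_k and breakpoints ell(p|alpha_i), so its utility peaks at the
   breakpoint z_m ending the segment of slope alpha_m = tau, and z_m >= c. On each segment p has
   slope at most alpha_i, so p <= disc(p,S) up to ell(p|alpha_k) >= c. Hence
   p c <= disc(p,S) c <= disc(p,S) z_m. *)

lemma lder_le_iff:
  assumes "0 \<le> x"
  shows "lder p x \<le> ereal \<beta> \<longleftrightarrow> (\<forall>a. 0 \<le> a \<longrightarrow> a < x \<longrightarrow> \<beta> * a - p a \<le> \<beta> * x - p x)"
proof (cases "x = 0")
  case True
  then show ?thesis by (simp add: lder_def)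
next
  case False
  then have "lder p x \<le> ereal \<beta> \<longleftrightarrow> (\<forall>\<delta>\<in>{0<..x}. (p x - p (x - \<delta>)) / \<delta> \<le> \<beta>)"
    by (simp add: lder_def SUP_le_iff)
  also have "\<dots> \<longleftrightarrow> (\<forall>\<delta>\<in>{0<..x}. \<beta> * (x - \<delta>) - p (x - \<delta>) \<le> \<beta> * x - p x)"
    by (auto simp: pos_divide_le_eq algebra_simps)
  also have "\<dots> \<longleftrightarrow> (\<forall>a. 0 \<le> a \<longrightarrow> a < x \<longrightarrow> \<beta> * a - p a \<le> \<beta> * x - p x)"
  proof
    assume H: "\<forall>\<delta>\<in>{0<..x}. \<beta> * (x - \<delta>) - p (x - \<delta>) \<le> \<beta> * x - p x"
    show "\<forall>a. 0 \<le> a \<longrightarrow> a < x \<longrightarrow> \<beta> * a - p a \<le> \<beta> * x - p x"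
    proof (intro allI impI)
      fix a assume "0 \<le> a" "a < x"
      then show "\<beta> * a - p a \<le> \<beta> * x - p x" using H[rule_format, of "x - a"] by auto
    qed
  next
    assume "\<forall>a. 0 \<le> a \<longrightarrow> a < x \<longrightarrow> \<beta> * a - p a \<le> \<beta> * x - p x"
    then show "\<forall>\<delta>\<in>{0<..x}. \<beta> * (x - \<delta>) - p (x - \<delta>) \<le> \<beta> * x - p x"
      by auto
  qed
  finally show ?thesis .
qed

lemma ell_last_maximizer:
  fixes p :: "real \<Rightarrow> real"
  assumes "continuous_on {0..1} p"
  shows "ell p \<beta> \<in> {0..1}"
    and "x \<in> {0..1} \<Longrightarrow> \<beta> * x - p x \<le> \<beta> * ell p \<beta> - p (ell p \<beta>)"
    and "x \<in> {ell p \<beta><..1} \<Longrightarrow> \<beta> * x - p x < \<beta> * ell p \<beta> - p (ell p \<beta>)"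
proof -
  define u where "u x = \<beta> * x - p x" for x
  have "continuous_on {0..1} u"
    unfolding u_def by (intro continuous_intros assms)
  then obtain x0 where x0: "x0 \<in> {0..1}" "\<And>y. y \<in> {0..1} \<Longrightarrow> u y \<le> u x0"
    using continuous_attains_sup[of "{0..1::real}" u] by auto
  define A where "A = {x \<in> {0..1}. u x0 \<le> u x}"
  have "closed A"
    unfolding A_def using \<open>continuous_on {0..1} u\<close>
    by (intro continuous_on_closed_Collect_le) auto
  moreover have "bdd_above A"
    by (rule bdd_aboveI[of _ 1]) (auto simp: A_def)
  ultimately have "Sup A \<in> A"
    using closed_contains_Sup[of A] x0 by (auto simp: A_def)
  define r where "r = Sup A"
  have r: "r \<in> {0..1}" "\<And>y. y \<in> {0..1} \<Longrightarrow> u y \<le> u r"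
    using \<open>Sup A \<in> A\<close> x0 by (force simp: r_def A_def)+
  have upper: "y \<le> r" if "y \<in> {0..1}" "u r \<le> u y" for y
    unfolding r_def using \<open>bdd_above A\<close>
    by (rule cSup_upper[rotated]) (use that r x0 in \<open>force simp: A_def r_def\<close>)
  have "ell p \<beta> = r"
    unfolding ell_def
  proof (rule Greatest_equality)
    show "r \<in> {0..1} \<and> lder p r \<le> ereal \<beta>"
      using r lder_le_iff[of r p \<beta>] by (simp add: u_def)
  next
    fix y assume y: "y \<in> {0..1} \<and> lder p y \<le> ereal \<beta>"
    show "y \<le> r"
    proof (cases "r < y")
      case True
      then have "u r \<le> u y"
        using y r(1) lder_le_iff[of y p \<beta>] by (simp add: u_def)
      then show ?thesis using y upper by blast
    qed simp
  qed
  then show "ell p \<beta> \<in> {0..1}"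
    and "x \<in> {0..1} \<Longrightarrow> \<beta> * x - p x \<le> \<beta> * ell p \<beta> - p (ell p \<beta>)"
    using r by (simp_all add: u_def)
  show "\<beta> * x - p x < \<beta> * ell p \<beta> - p (ell p \<beta>)" if "x \<in> {ell p \<beta><..1}"
    using that upper[of x] r \<open>ell p \<beta> = r\<close> by (force simp: u_def)
qed

lemma ell_mono:
  fixes p :: "real \<Rightarrow> real"
  assumes "continuous_on {0..1} p" and "\<beta> \<le> \<beta>'"
  shows "ell p \<beta> \<le> ell p \<beta>'"
proof (rule ccontr)
  let ?c = "ell p \<beta>" and ?c' = "ell p \<beta>'"
  assume "\<not> ?c \<le> ?c'"
  then have "\<beta>' * ?c - p ?c < \<beta>' * ?c' - p ?c'"
    using ell_last_maximizer[OF assms(1)] by auto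
  moreover have "\<beta> * ?c' - p ?c' \<le> \<beta> * ?c - p ?c"
    using ell_last_maximizer[OF assms(1)] by auto
  moreover have "\<beta> * (?c - ?c') \<le> \<beta>' * (?c - ?c')"
    using \<open>\<not> ?c \<le> ?c'\<close> assms(2) by (intro mult_right_mono) auto
  ultimately show False by (simp add: algebra_simps)
qed

definition single_peaked_at :: "(real \<Rightarrow> real) \<Rightarrow> real \<Rightarrow> bool" where
  "single_peaked_at u c \<longleftrightarrow> c \<in> {0..1} \<and> mono_on {0..c} u \<and> (\<forall>x\<in>{c<..1}. u x < u c)"

lemma single_peaked_at_ell:
  fixes p :: "real \<Rightarrow> real"
  assumes cont: "continuous_on {0..1} p" and cv: "convex_on {0..1} p"
  shows "single_peaked_at (\<lambda>x. \<beta> * x - p x) (ell p \<beta>)"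
proof -
  let ?c = "ell p \<beta>" and ?u = "\<lambda>x. \<beta> * x - p x"
  have c: "?c \<in> {0..1}" by (rule ell_last_maximizer(1)[OF cont])
  have "?u a \<le> ?u b" if "0 \<le> a" "a \<le> b" "b \<le> ?c" for a b
  proof -
    have "convex_on {a..?c} p"
      using c that by (intro convex_on_subset[OF cv]) auto
    then have "concave_on {a..?c} ?u"
      by (intro concave_on_diff) (auto simp: concave_on_iff algebra_simps)
    then have "min (?u a) (?u ?c) \<le> ?u b"
      using that by (intro concave_on_ge_min) auto
    moreover have "?u a \<le> ?u ?c"
      using c that by (intro ell_last_maximizer(2)[OF cont]) auto
    ultimately show ?thesis by simp
  qed
  then show ?thesis
    using c ell_last_maximizer(3)[OF cont] by (auto simp: single_peaked_at_def intro!: mono_onI)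
qed

lemma revenue_cong:
  assumes "\<And>x. x \<in> {0..1} \<Longrightarrow> q x = q' x"
  shows "revenue q v b = revenue q' v b"
proof -
  have F: "feasible q b = feasible q' b"
    using assms by (auto simp: feasible_def)
  then have "opt_util q v b = opt_util q' v b"
    unfolding opt_util_def using assms by (intro SUP_cong) (auto simp: feasible_def)
  then have "demand q v b = demand q' v b"
    using F assms by (auto simp: demand_def feasible_def)
  then show ?thesis
    unfolding revenue_def using assms by (intro SUP_cong) (auto simp: demand_def feasible_def)
qed

lemma feasible_eq_atLeastAtMost:
  fixes q :: "real \<Rightarrow> real"
  assumes cont: "continuous_on {0..1} q" and mono: "mono_on {0..1} q" and "q 0 \<le> b"
  obtains d where "d \<in> {0..1}" "feasible q b = {0..d}"
proof -
  let ?F = "feasible q b"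
  define d where "d = Sup ?F"
  have "closed ?F"
    unfolding feasible_def using cont by (intro continuous_on_closed_Collect_le) auto
  moreover have "bdd_above ?F"
    by (rule bdd_aboveI[of _ 1]) (auto simp: feasible_def)
  moreover have "0 \<in> ?F"
    using \<open>q 0 \<le> b\<close> by (simp add: feasible_def)
  ultimately have d: "d \<in> ?F" and upper: "\<And>x. x \<in> ?F \<Longrightarrow> x \<le> d"
    unfolding d_def using closed_contains_Sup cSup_upper by blast+
  have "d \<in> {0..1}" "q d \<le> b"
    using d by (auto simp: feasible_def)
  have "?F = {0..d}"
  proof
    show "?F \<subseteq> {0..d}" using upper by (auto simp: feasible_def)
    show "{0..d} \<subseteq> ?F"
      using \<open>d \<in> {0..1}\<close> \<open>q d \<le> b\<close> mono_onD[OF mono] by (fastforce simp: feasible_def)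
  qed
  with \<open>d \<in> {0..1}\<close> show ?thesis by (rule that)
qed

lemma single_peaked_at_truncate:
  assumes peak: "single_peaked_at u c" and "d \<in> {0..1}" and x: "x \<in> {0..d}"
  shows "u x \<le> u (min c d)" and "min c d < x \<Longrightarrow> u x < u (min c d)"
proof -
  have c: "c \<in> {0..1}" and up: "mono_on {0..c} u" and down: "\<And>x. x \<in> {c<..1} \<Longrightarrow> u x < u c"
    using peak by (auto simp: single_peaked_at_def)
  show "u x \<le> u (min c d)"
  proof (cases "x \<le> c")
    case True
    then show ?thesis using x c by (intro mono_onD[OF up]) auto
  next
    case False
    then show ?thesis using x \<open>d \<in> {0..1}\<close> down[of x] by (auto simp: min_def)
  qed
  assume "min c d < x"
  then have "c < x" "min c d = c" using x by auto
  then show "u x < u (min c d)" using x \<open>d \<in> {0..1}\<close> down[of x] by auto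
qed

lemma price_at_min_feasible_end:
  fixes q :: "real \<Rightarrow> real"
  assumes cont: "continuous_on {0..1} q" and mono: "mono_on {0..1} q" and "q 0 = 0" and "0 \<le> b"
    and c: "c \<in> {0..1}" and d: "d \<in> {0..1}" and F: "feasible q b = {0..d}"
  shows "q (min c d) = min (q c) b"
proof (cases "c \<le> d")
  case True
  then have "c \<in> feasible q b" unfolding F using c by auto
  then show ?thesis using True by (simp add: feasible_def)
next
  case False
  then have "b < q c" using F c by (auto simp: feasible_def)
  moreover have "continuous_on {0..c} q" using c by (intro continuous_on_subset[OF cont]) auto
  ultimately obtain y where y: "0 \<le> y" "y \<le> c" "q y = b"
    using IVT'[of q 0 b c] \<open>q 0 = 0\<close> \<open>0 \<le> b\<close> c by auto
  then have "y \<le> d" using F c by (auto simp: feasible_def)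
  then have "b \<le> q d" using y d c mono_onD[OF mono, of y d] by auto
  moreover have "d \<in> feasible q b" unfolding F using d by auto
  ultimately show ?thesis using False \<open>b < q c\<close> by (simp add: feasible_def)
qed

lemma revenue_single_peaked:
  fixes q :: "real \<Rightarrow> real"
  assumes cont: "continuous_on {0..1} q" and mono: "mono_on {0..1} q" and "q 0 = 0"
    and "0 \<le> b" and peak: "single_peaked_at (\<lambda>x. \<tau> * x - q x) c"
  shows "revenue q (\<lambda>x. \<tau> * x) b = min (q c) b"
proof -
  let ?u = "\<lambda>x. \<tau> * x - q x"
  obtain d where d: "d \<in> {0..1}" and F: "feasible q b = {0..d}"
    using feasible_eq_atLeastAtMost[OF cont mono] \<open>q 0 = 0\<close> \<open>0 \<le> b\<close> by auto
  have c: "c \<in> {0..1}" using peak by (simp add: single_peaked_at_def)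
  define x0 where "x0 = min c d"
  have x0: "x0 \<in> {0..d}" using c d by (auto simp: x0_def)
  note below = single_peaked_at_truncate(1)[OF peak d, folded x0_def]
    and strict = single_peaked_at_truncate(2)[OF peak d, folded x0_def]
  have "opt_util q (\<lambda>x. \<tau> * x) b = ?u x0"
    unfolding opt_util_def F using x0 below by (intro cSup_eq_maximum) auto
  then have D: "demand q (\<lambda>x. \<tau> * x) b = {x \<in> {0..d}. ?u x = ?u x0}"
    by (simp add: demand_def F)
  have "revenue q (\<lambda>x. \<tau> * x) b = q x0"
    unfolding revenue_def D
  proof (rule cSup_eq_maximum)
    show "q x0 \<in> q ` {x \<in> {0..d}. ?u x = ?u x0}" using x0 by auto
    show "y \<le> q x0" if "y \<in> q ` {x \<in> {0..d}. ?u x = ?u x0}" for y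
      using that strict x0 d by (force intro: mono_onD[OF mono])
  qed
  also have "q x0 = min (q c) b"
    unfolding x0_def using assms(1-4) c d F by (rule price_at_min_feasible_end)
  finally show ?thesis .
qed

definition seg_len :: "(nat \<Rightarrow> real) \<Rightarrow> nat \<Rightarrow> real \<Rightarrow> real" where
  "seg_len Z i x = min x (Z i) - min x (Z (i - 1))"

definition pwlin :: "nat \<Rightarrow> (nat \<Rightarrow> real) \<Rightarrow> (nat \<Rightarrow> real) \<Rightarrow> real \<Rightarrow> real" where
  "pwlin k Z \<alpha> x = (\<Sum>i=1..k. \<alpha> i * seg_len Z i x)"

lemma continuous_on_pwlin: "continuous_on A (pwlin k Z \<alpha>)"
  unfolding pwlin_def seg_len_def by (intro continuous_intros)

locale breakpoints =
  fixes k :: nat and Z :: "nat \<Rightarrow> real"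
  assumes k_pos: "1 \<le> k" and Z_0: "Z 0 = 0" and Z_k: "Z k = 1"
    and Z_mono: "\<And>i j. i \<le> j \<Longrightarrow> j \<le> k \<Longrightarrow> Z i \<le> Z j"
begin

lemma Z_in_unit: "i \<le> k \<Longrightarrow> Z i \<in> {0..1}"
  using Z_mono[of 0 i] Z_mono[of i k] Z_0 Z_k by auto

lemma seg_len_mono: "i \<le> k \<Longrightarrow> x \<le> y \<Longrightarrow> seg_len Z i x \<le> seg_len Z i y"
  using Z_mono[of "i - 1" i] by (auto simp: seg_len_def min_def)

lemma seg_len_full: "i \<le> k \<Longrightarrow> Z i \<le> x \<Longrightarrow> seg_len Z i x = Z i - Z (i - 1)"
  using Z_mono[of "i - 1" i] by (auto simp: seg_len_def)

lemma seg_len_empty: "i \<le> k \<Longrightarrow> x \<le> Z (i - 1) \<Longrightarrow> seg_len Z i x = 0"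
  using Z_mono[of "i - 1" i] by (auto simp: seg_len_def)

lemma sum_seg_len: "x \<in> {0..1} \<Longrightarrow> (\<Sum>i=1..k. seg_len Z i x) = x"
  unfolding seg_len_def using sum_telescope''[of 0 k "\<lambda>i. min x (Z i)"] Z_0 Z_k by auto

lemma pwlin_0: "pwlin k Z \<alpha> 0 = 0"
  using Z_in_unit by (auto simp: pwlin_def seg_len_def min_def intro!: sum.neutral)

lemma mono_on_pwlin: "(\<And>i. i \<in> {1..k} \<Longrightarrow> 0 \<le> \<alpha> i) \<Longrightarrow> mono_on A (pwlin k Z \<alpha>)"
  unfolding pwlin_def by (intro mono_onI sum_mono mult_left_mono seg_len_mono) auto

lemma utility_pwlin:
  assumes "x \<in> {0..1}"
  shows "\<tau> * x - pwlin k Z \<alpha> x = (\<Sum>i=1..k. (\<tau> - \<alpha> i) * seg_len Z i x)"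
proof -
  have "\<tau> * x = \<tau> * (\<Sum>i=1..k. seg_len Z i x)"
    by (simp only: sum_seg_len[OF assms])
  then show ?thesis
    unfolding pwlin_def by (simp add: sum_distrib_left algebra_simps sum_subtractf)
qed

lemma pwlin_utility_mono_upto:
  assumes \<alpha>: "strict_mono_on {1..k} \<alpha>" and m: "m \<in> {1..k}" "\<alpha> m = \<tau>"
    and xy: "0 \<le> x" "x \<le> y" "y \<le> Z m"
  shows "\<tau> * x - pwlin k Z \<alpha> x \<le> \<tau> * y - pwlin k Z \<alpha> y"
proof -
  have "(\<tau> - \<alpha> i) * seg_len Z i x \<le> (\<tau> - \<alpha> i) * seg_len Z i y" if i: "i \<in> {1..k}" for i
  proof (cases "i \<le> m")
    case True
    then have "\<alpha> i \<le> \<tau>" using strict_mono_on_leD[OF \<alpha>, of i m] i m by auto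
    then show ?thesis using i xy by (intro mult_left_mono seg_len_mono) auto
  next
    case False
    then have "Z m \<le> Z (i - 1)" using i by (intro Z_mono) auto
    then show ?thesis using i xy by (simp add: seg_len_empty)
  qed
  then have "(\<Sum>i=1..k. (\<tau> - \<alpha> i) * seg_len Z i x) \<le> (\<Sum>i=1..k. (\<tau> - \<alpha> i) * seg_len Z i y)"
    by (rule sum_mono)
  then show ?thesis
    using xy Z_in_unit[of m] m utility_pwlin[of x] utility_pwlin[of y] by simp
qed

lemma pwlin_utility_less_after:
  assumes \<alpha>: "strict_mono_on {1..k} \<alpha>" and m: "m \<in> {1..k}" "\<alpha> m = \<tau>"
    and y: "Z m < y" "y \<le> 1"
  shows "\<tau> * y - pwlin k Z \<alpha> y < \<tau> * Z m - pwlin k Z \<alpha> (Z m)"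
proof -
  have "m < k" using y Z_k m by (cases "m = k") auto
  then have "\<tau> < \<alpha> (m + 1)" using \<alpha> m by (auto simp: strict_mono_on_def)
  define \<Delta> where "\<Delta> i = seg_len Z i y - seg_len Z i (Z m)" for i
  have Zm: "Z m \<in> {0..1}" using Z_in_unit m by auto
  have "(\<tau> - \<alpha> i) * \<Delta> i \<le> (\<tau> - \<alpha> (m + 1)) * \<Delta> i" if i: "i \<in> {1..k}" for i
  proof (cases "i \<le> m")
    case True
    then have "Z i \<le> Z m" using m by (intro Z_mono) auto
    then show ?thesis using i y by (simp add: \<Delta>_def seg_len_full)
  next
    case False
    then have "\<alpha> (m + 1) \<le> \<alpha> i" using strict_mono_on_leD[OF \<alpha>, of "m + 1" i] i m by auto
    moreover have "0 \<le> \<Delta> i" using i y seg_len_mono[of i "Z m" y] by (simp add: \<Delta>_def)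
    ultimately show ?thesis by (intro mult_right_mono) auto
  qed
  then have "(\<Sum>i=1..k. (\<tau> - \<alpha> i) * \<Delta> i) \<le> (\<Sum>i=1..k. (\<tau> - \<alpha> (m + 1)) * \<Delta> i)"
    by (rule sum_mono)
  also have "\<dots> = (\<tau> - \<alpha> (m + 1)) * (y - Z m)"
    using y Zm sum_seg_len[of y] sum_seg_len[of "Z m"]
    by (simp add: \<Delta>_def sum_subtractf flip: sum_distrib_left)
  also have "\<dots> < 0"
    using \<open>\<tau> < \<alpha> (m + 1)\<close> y by (intro mult_neg_pos) auto
  finally show ?thesis
    using y Zm utility_pwlin[of y] utility_pwlin[of "Z m"]
    by (simp add: \<Delta>_def sum_subtractf right_diff_distrib)
qed

lemma single_peaked_at_pwlin:
  assumes "strict_mono_on {1..k} \<alpha>" and "m \<in> {1..k}" "\<alpha> m = \<tau>"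
  shows "single_peaked_at (\<lambda>x. \<tau> * x - pwlin k Z \<alpha> x) (Z m)"
  using assms Z_in_unit[of m] pwlin_utility_mono_upto[OF assms] pwlin_utility_less_after[OF assms]
  by (auto simp: single_peaked_at_def intro!: mono_onI)

lemma pwlin_eq_segment:
  assumes i: "i \<in> {1..k}" and x: "Z (i - 1) \<le> x" "x \<le> Z i"
  shows "pwlin k Z \<alpha> x = (\<Sum>j=1..i-1. \<alpha> j * (Z j - Z (j - 1))) + \<alpha> i * (x - Z (i - 1))"
proof -
  have split: "{1..k} = {1..i-1} \<union> ({i} \<union> {i+1..k})" using i by auto
  have "pwlin k Z \<alpha> x = (\<Sum>j=1..i-1. \<alpha> j * seg_len Z j x)
      + (\<alpha> i * seg_len Z i x + (\<Sum>j=i+1..k. \<alpha> j * seg_len Z j x))"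
    unfolding pwlin_def split by (subst sum.union_disjoint; auto)+
  also have "(\<Sum>j=1..i-1. \<alpha> j * seg_len Z j x) = (\<Sum>j=1..i-1. \<alpha> j * (Z j - Z (j - 1)))"
  proof (rule sum.cong)
    fix j assume "j \<in> {1..i-1}"
    then have "Z j \<le> Z (i - 1)" using i by (intro Z_mono) auto
    then have "Z j \<le> x" using x by simp
    moreover have "j \<le> k" using \<open>j \<in> {1..i-1}\<close> i by auto
    ultimately show "\<alpha> j * seg_len Z j x = \<alpha> j * (Z j - Z (j - 1))"
      by (simp add: seg_len_full)
  qed simp
  also have "(\<Sum>j=i+1..k. \<alpha> j * seg_len Z j x) = 0"
  proof (rule sum.neutral, rule ballI)
    fix j assume "j \<in> {i+1..k}"
    then have "Z i \<le> Z (j - 1)" by (intro Z_mono) auto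
    then have "x \<le> Z (j - 1)" using x by simp
    then show "\<alpha> j * seg_len Z j x = 0"
      using \<open>j \<in> {i+1..k}\<close> by (simp add: seg_len_empty)
  qed
  also have "seg_len Z i x = x - Z (i - 1)"
    using x by (simp add: seg_len_def)
  finally show ?thesis by simp
qed

lemma plin_eq_pwlin:
  assumes zZ: "\<And>i. 1 \<le> i \<Longrightarrow> i < k \<Longrightarrow> z i = Z i" and x: "x \<in> {0..1}"
  shows "plin k z \<alpha> x = pwlin k Z \<alpha> x"
proof (cases "x = 0")
  case True
  then show ?thesis by (simp add: plin_def pwlin_0)
next
  case False
  define z0 where "z0 i = (if i = 0 then 0 else z i)" for i
  have z0Z: "z0 i = Z i" if "i < k" for i
    using zZ[of i] that Z_0 by (auto simp: z0_def)
  define P where "P i \<longleftrightarrow> i \<in> {1..k} \<and> z0 (i - 1) < x" for i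
  define I where "I = Greatest P"
  have "P 1" using k_pos x False by (auto simp: P_def z0_def)
  moreover have bound: "\<And>i. P i \<Longrightarrow> i \<le> k" by (auto simp: P_def)
  ultimately have "P I" and greatest: "\<And>i. P i \<Longrightarrow> i \<le> I"
    unfolding I_def by (blast intro: GreatestI_nat Greatest_le_nat)+
  then have I: "I \<in> {1..k}" "Z (I - 1) < x"
    using z0Z[of "I - 1"] by (auto simp: P_def)
  have "x \<le> Z I"
  proof (cases "I = k")
    case True
    then show ?thesis using Z_k x by simp
  next
    case False
    then have "\<not> P (I + 1)" using greatest by fastforce
    then show ?thesis using False I z0Z[of I] by (auto simp: P_def)
  qed
  have "plin k z \<alpha> x = (\<Sum>j=1..I-1. \<alpha> j * (z0 j - z0 (j - 1))) + \<alpha> I * (x - z0 (I - 1))"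
    using False unfolding plin_def Let_def z0_def[symmetric] P_def[symmetric] I_def[symmetric]
    by simp
  also have "\<dots> = (\<Sum>j=1..I-1. \<alpha> j * (Z j - Z (j - 1))) + \<alpha> I * (x - Z (I - 1))"
    using I by (intro arg_cong2[where f = "(+)"] sum.cong) (auto simp: z0Z)
  also have "\<dots> = pwlin k Z \<alpha> x"
    using I \<open>x \<le> Z I\<close> by (simp add: pwlin_eq_segment)
  finally show ?thesis .
qed

lemma le_pwlin_upto_ell:
  fixes p :: "real \<Rightarrow> real"
  assumes cont: "continuous_on {0..1} p" and cv: "convex_on {0..1} p"
    and Z_ell: "\<And>i. 1 \<le> i \<Longrightarrow> i < k \<Longrightarrow> Z i = ell p (\<alpha> i)"
    and y: "y \<in> {0..1}" "y \<le> ell p (\<alpha> k)"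
  shows "p y \<le> p 0 + pwlin k Z \<alpha> y"
proof -
  have "p y - p 0 = (\<Sum>i=1..k. p (min y (Z i)) - p (min y (Z (i - 1))))"
    using sum_telescope''[of 0 k "\<lambda>i. p (min y (Z i))"] Z_0 Z_k y by auto
  also have "\<dots> \<le> (\<Sum>i=1..k. \<alpha> i * seg_len Z i y)"
  proof (rule sum_mono)
    fix i assume i: "i \<in> {1..k}"
    let ?a = "min y (Z (i - 1))" and ?b = "min y (Z i)"
    have "?b \<le> ell p (\<alpha> i)"
      using Z_ell y i by (cases "i < k") auto
    moreover have "0 \<le> ?a" "?a \<le> ?b"
      using y i Z_in_unit[of "i - 1"] Z_mono[of "i - 1" i] by auto
    moreover have "mono_on {0..ell p (\<alpha> i)} (\<lambda>x. \<alpha> i * x - p x)"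
      using single_peaked_at_ell[OF cont cv] by (simp add: single_peaked_at_def)
    ultimately have "\<alpha> i * ?a - p ?a \<le> \<alpha> i * ?b - p ?b"
      by (auto elim!: mono_onD)
    then show "p ?b - p ?a \<le> \<alpha> i * seg_len Z i y"
      by (simp add: seg_len_def algebra_simps)
  qed
  finally show ?thesis by (simp add: pwlin_def)
qed

end

(* 1-based, matching alpha_i in disc. *)
definition sorted_nth :: "'a::linorder set \<Rightarrow> nat \<Rightarrow> 'a" where
  "sorted_nth S i = sorted_list_of_set S ! (i - 1)"

lemma strict_mono_on_sorted_nth:
  assumes "finite S"
  shows "strict_mono_on {1..card S} (sorted_nth S)"
  using sorted_wrt_iff_nth_less[THEN iffD1, OF strict_sorted_list_of_set[of S]] assms
  by (auto simp: strict_mono_on_def sorted_nth_def)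

lemma sorted_nth_in:
  assumes "finite S" "i \<in> {1..card S}"
  shows "sorted_nth S i \<in> S"
  using nth_mem[of "i - 1" "sorted_list_of_set S"] assms by (auto simp: sorted_nth_def)

lemma ex_sorted_nth_eq:
  assumes "finite S" "x \<in> S"
  shows "\<exists>i\<in>{1..card S}. sorted_nth S i = x"
proof -
  obtain j where "j < card S" "sorted_list_of_set S ! j = x"
    using assms by (metis in_set_conv_nth length_sorted_list_of_set set_sorted_list_of_set)
  then show ?thesis by (intro bexI[of _ "Suc j"]) (auto simp: sorted_nth_def)
qed

(* plin never reads z_0 and z_k; fixing them to 0 and 1 makes the segments partition [0,1]. *)
definition disc_breaks :: "(real \<Rightarrow> real) \<Rightarrow> real set \<Rightarrow> nat \<Rightarrow> real" where
  "disc_breaks p S i = (if i = 0 then 0 else if i < card S then ell p (sorted_nth S i) else 1)"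

lemma breakpoints_disc_breaks:
  assumes cont: "continuous_on {0..1} p" and "finite S" "S \<noteq> {}"
  shows "breakpoints (card S) (disc_breaks p S)"
proof
  have "0 < card S" using \<open>finite S\<close> \<open>S \<noteq> {}\<close> by (simp add: card_gt_0_iff)
  then show "1 \<le> card S" "disc_breaks p S 0 = 0" "disc_breaks p S (card S) = 1"
    by (simp_all add: disc_breaks_def)
  fix i j assume "i \<le> j" "j \<le> card S"
  then show "disc_breaks p S i \<le> disc_breaks p S j"
    using ell_last_maximizer(1)[OF cont] strict_mono_on_leD[OF strict_mono_on_sorted_nth[OF \<open>finite S\<close>]]
      ell_mono[OF cont]
    by (auto simp: disc_breaks_def)
qed

lemma disc_eq_pwlin:
  assumes "continuous_on {0..1} p" and "finite S" "S \<noteq> {}" and "x \<in> {0..1}"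
  shows "disc p S x = p 0 + pwlin (card S) (disc_breaks p S) (sorted_nth S) x"
proof -
  interpret breakpoints "card S" "disc_breaks p S"
    using assms(1-3) by (rule breakpoints_disc_breaks)
  have "disc p S x = p 0 + plin (card S) (\<lambda>i. ell p (sorted_nth S i)) (sorted_nth S) x"
    by (simp add: disc_def sorted_nth_def[abs_def])
  also have "\<dots> = p 0 + pwlin (card S) (disc_breaks p S) (sorted_nth S) x"
    using assms by (simp add: plin_eq_pwlin disc_breaks_def)
  finally show ?thesis .
qed

theorem mainTheorem17:
  fixes p :: "real \<Rightarrow> real" and \<tau> :: real and S :: "real set" and b :: real
  assumes "mono_on {0..1} p"
    and "continuous_on {0..1} p"
    and "convex_on {0..1} p"
    and "\<forall>x\<in>{0..1}. p x \<ge> 0"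
    and "p 0 = 0"
    and "\<tau> \<ge> 0"
    and "finite S" and "S \<subseteq> {0..}" and "\<tau> \<in> S"
    and "b \<ge> 0"
  shows "revenue (disc p S) (\<lambda>x. \<tau> * x) b \<ge> revenue p (\<lambda>x. \<tau> * x) b"
proof -
  note mono = assms(1) and cont = assms(2) and cv = assms(3) and p0 = assms(5)
  let ?k = "card S" and ?\<alpha> = "sorted_nth S" and ?Z = "disc_breaks p S"
  let ?q = "pwlin ?k ?Z ?\<alpha>" and ?c = "ell p \<tau>"
  have "S \<noteq> {}" using \<open>\<tau> \<in> S\<close> by auto
  interpret breakpoints ?k ?Z
    using cont \<open>finite S\<close> \<open>S \<noteq> {}\<close> by (rule breakpoints_disc_breaks)
  have \<alpha>: "strict_mono_on {1..?k} ?\<alpha>"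
    using \<open>finite S\<close> by (rule strict_mono_on_sorted_nth)
  obtain m where m: "m \<in> {1..?k}" "?\<alpha> m = \<tau>"
    using ex_sorted_nth_eq[OF \<open>finite S\<close> \<open>\<tau> \<in> S\<close>] by blast
  have q_mono: "mono_on {0..1} ?q"
    using sorted_nth_in[OF \<open>finite S\<close>] \<open>S \<subseteq> {0..}\<close> by (intro mono_on_pwlin) auto
  have "revenue p (\<lambda>x. \<tau> * x) b = min (p ?c) b"
    using cont mono p0 \<open>b \<ge> 0\<close> single_peaked_at_ell[OF cont cv] by (rule revenue_single_peaked)
  moreover have "revenue (disc p S) (\<lambda>x. \<tau> * x) b = revenue ?q (\<lambda>x. \<tau> * x) b"
    using disc_eq_pwlin[OF cont \<open>finite S\<close> \<open>S \<noteq> {}\<close>] p0 by (intro revenue_cong) simp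
  moreover have "revenue ?q (\<lambda>x. \<tau> * x) b = min (?q (?Z m)) b"
    using continuous_on_pwlin q_mono pwlin_0 \<open>b \<ge> 0\<close> single_peaked_at_pwlin[OF \<alpha> m]
    by (rule revenue_single_peaked)
  moreover have "p ?c \<le> ?q ?c"
  proof -
    have "?c \<le> ell p (?\<alpha> ?k)"
      using m strict_mono_on_leD[OF \<alpha>, of m ?k] by (intro ell_mono[OF cont]) auto
    then show ?thesis
      using le_pwlin_upto_ell[OF cont cv, of ?\<alpha> ?c] ell_last_maximizer(1)[OF cont] p0
      by (simp add: disc_breaks_def)
  qed
  moreover have "?c \<le> ?Z m"
    using m ell_last_maximizer(1)[OF cont] by (auto simp: disc_breaks_def)
  then have "?q ?c \<le> ?q (?Z m)"
    using q_mono ell_last_maximizer(1)[OF cont] Z_in_unit[of m] m by (auto elim!: mono_onD)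
  ultimately show ?thesis by linarith
qed

end
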